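(* Let $N$ be a Niemeier lattice rationally generated by roots, let $R=\bigoplus_{k\in\Omega}R_k$ be its maximal root system decomposed into irreducible components, so that $N\subset R^\vee=\bigoplus_kR_k^\vee$, and for $v\in N$ let $v_k\in R_k^\vee$ be its orthogonal projection. If $l\in N$ satisfies $l^2=4$ and $l\cdot\hbar=4$ for some $\hbar\in N$, and $l\bmod R\neq0$ in $R^\vee/R$, then for every $k\in\Omega$ the vector $l_k$ is a vector of minimal square in its class $l_k+R_k\subset R_k^\vee$.
   Context: A Niemeier lattice is a positive definite even unimodular lattice of rank $24$. A root is a vector of square $2$. The maximal root system $R\subset N$ is the sublattice generated by all roots of $N$; it decomposes uniquely into an orthogonal sum of irreducible root systems $R_k$ (of types $A_n,D_n,E_6,E_7,E_8$). *)

theory Defs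
  imports "HOL-Analysis.Analysis"
begin

type_synonym vec24 = "real ^ 24"

definition zspan :: "vec24 set \<Rightarrow> vec24 set" where
  "zspan S = {(\<Sum>s\<in>F. of_int (c s) *\<^sub>R s) | F c. finite F \<and> F \<subseteq> S}"

definition is_lattice :: "vec24 set \<Rightarrow> bool" where
  "is_lattice L \<longleftrightarrow> (\<exists>B. independent B \<and> span B = UNIV \<and> L = zspan B)"

definition dual :: "vec24 set \<Rightarrow> vec24 set" where
  "dual S = {x \<in> span S. \<forall>v\<in>S. x \<bullet> v \<in> \<int>}"

definition even_lattice :: "vec24 set \<Rightarrow> bool" where
  "even_lattice L \<longleftrightarrow> (\<forall>v\<in>L. \<exists>k::int. v \<bullet> v = 2 * of_int k)"

text \<open>Niemeier lattice: positive definite (automatic in Euclidean R^24) even unimodular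
  lattice of rank 24.\<close>
definition niemeier :: "vec24 set \<Rightarrow> bool" where
  "niemeier N \<longleftrightarrow> is_lattice N \<and> even_lattice N \<and> dual N = N"

definition roots :: "vec24 set \<Rightarrow> vec24 set" where
  "roots N = {v \<in> N. v \<bullet> v = 2}"

definition root_sublattice :: "vec24 set \<Rightarrow> vec24 set" where
  "root_sublattice N = zspan (roots N)"

definition rationally_generated_by_roots :: "vec24 set \<Rightarrow> bool" where
  "rationally_generated_by_roots N \<longleftrightarrow> span (roots N) = UNIV"

text \<open>Irreducible components: roots are connected if linked by a chain of
  non-orthogonal roots; each connectivity class C of roots generates an irreducible
  component zspan C.\<close>
definition root_linked :: "vec24 set \<Rightarrow> vec24 \<Rightarrow> vec24 \<Rightarrow> bool" where
  "root_linked N = (\<lambda>r s. r \<in> roots N \<and> s \<in> roots N \<and> r \<bullet> s \<noteq> 0)\<^sup>*\<^sup>*"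

definition root_classes :: "vec24 set \<Rightarrow> vec24 set set" where
  "root_classes N = {{s \<in> roots N. root_linked N r s} | r. r \<in> roots N}"

definition components :: "vec24 set \<Rightarrow> vec24 set set" where
  "components N = zspan ` root_classes N"

definition proj :: "vec24 set \<Rightarrow> vec24 \<Rightarrow> vec24" where
  "proj S v = (THE w. w \<in> span S \<and> (\<forall>u\<in>span S. (v - w) \<bullet> u = 0))"

definition minimal_in_class :: "vec24 \<Rightarrow> vec24 set \<Rightarrow> bool" where
  "minimal_in_class x L \<longleftrightarrow> (\<forall>r\<in>L. x \<bullet> x \<le> (x + r) \<bullet> (x + r))"

end

theory Submission
  imports Defs
begin

(* If some l_k + r with r in R_k were shorter than l_k, then, since r is orthogonal to l - l_k,
   the vector l + r would be shorter than l, i.e. of square 0 or 2 by evenness.  It would thus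
   lie in R, and so would l. *)

lemma proj_unique_exists:
  fixes S :: "'a::euclidean_space set"
  shows "\<exists>!w. w \<in> span S \<and> (\<forall>u\<in>span S. (v - w) \<bullet> u = 0)"
proof -
  obtain y z where y: "y \<in> span S" and z: "\<And>w. w \<in> span S \<Longrightarrow> orthogonal z w"
    and v: "v = y + z"
    using orthogonal_subspace_decomp_exists[of S v] by blast
  show ?thesis
  proof
    show "y \<in> span S \<and> (\<forall>u\<in>span S. (v - y) \<bullet> u = 0)"
      using y z v by (simp add: orthogonal_def)
  next
    fix w assume w: "w \<in> span S \<and> (\<forall>u\<in>span S. (v - w) \<bullet> u = 0)"
    have d: "w - y \<in> span S" using w y span_diff by blast
    have "(v - y) \<bullet> (w - y) = 0" using z[OF d] v by (simp add: orthogonal_def)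
    moreover have "(v - w) \<bullet> (w - y) = 0" using w d by blast
    ultimately have "(w - y) \<bullet> (w - y) = 0"
      by (simp add: inner_diff_left inner_diff_right inner_commute)
    then show "w = y" by simp
  qed
qed

lemma proj_in_span: "proj S v \<in> span S"
  using theI'[OF proj_unique_exists] unfolding proj_def by blast

lemma proj_orthogonal: "u \<in> span S \<Longrightarrow> (v - proj S v) \<bullet> u = 0"
  using theI'[OF proj_unique_exists] unfolding proj_def by blast

lemma minimal_in_class_proj:
  assumes "\<forall>r\<in>L. v \<bullet> v \<le> (v + r) \<bullet> (v + r)"
  shows "minimal_in_class (proj L v) L"
  unfolding minimal_in_class_def
proof
  fix r assume r: "r \<in> L"
  have "v \<bullet> r = proj L v \<bullet> r"
    using proj_orthogonal[OF span_base[OF r], of v] by (simp add: inner_diff_left)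
  then have "(v + r) \<bullet> (v + r) - v \<bullet> v
      = (proj L v + r) \<bullet> (proj L v + r) - proj L v \<bullet> proj L v"
    by (simp add: inner_add_left inner_add_right inner_commute)
  with assms r show "proj L v \<bullet> proj L v \<le> (proj L v + r) \<bullet> (proj L v + r)"
    by fastforce
qed

lemma zspan_superset: "x \<in> S \<Longrightarrow> x \<in> zspan S"
  unfolding zspan_def by (intro CollectI exI[of _ "{x}"] exI[of _ "\<lambda>_. 1"]) simp

lemma zspan_zero: "0 \<in> zspan S"
  unfolding zspan_def by (intro CollectI exI[of _ "{}"]) simp

lemma zspan_add:
  assumes "x \<in> zspan S" "y \<in> zspan S"
  shows "x + y \<in> zspan S"
proof -
  obtain F c where F: "finite F" "F \<subseteq> S" "x = (\<Sum>s\<in>F. of_int (c s) *\<^sub>R s)"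
    using assms(1) unfolding zspan_def by blast
  obtain G d where G: "finite G" "G \<subseteq> S" "y = (\<Sum>s\<in>G. of_int (d s) *\<^sub>R s)"
    using assms(2) unfolding zspan_def by blast
  define e where "e s = (if s \<in> F then c s else 0) + (if s \<in> G then d s else 0)" for s
  have "x = (\<Sum>s\<in>F \<union> G. of_int (if s \<in> F then c s else 0) *\<^sub>R s)"
    unfolding F(3) by (rule sum.mono_neutral_cong_left) (use F G in auto)
  moreover have "y = (\<Sum>s\<in>F \<union> G. of_int (if s \<in> G then d s else 0) *\<^sub>R s)"
    unfolding G(3) by (rule sum.mono_neutral_cong_left) (use F G in auto)
  ultimately have "x + y = (\<Sum>s\<in>F \<union> G. of_int (e s) *\<^sub>R s)"
    by (simp add: e_def sum.distrib[symmetric] scaleR_add_left)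
  then show ?thesis
    unfolding zspan_def using F G by (intro CollectI exI[of _ "F \<union> G"] exI[of _ e]) auto
qed

lemma zspan_scaleR_of_int:
  assumes "x \<in> zspan S"
  shows "of_int a *\<^sub>R x \<in> zspan S"
proof -
  obtain F c where F: "finite F" "F \<subseteq> S" "x = (\<Sum>s\<in>F. of_int (c s) *\<^sub>R s)"
    using assms unfolding zspan_def by blast
  have "of_int a *\<^sub>R x = (\<Sum>s\<in>F. of_int (a * c s) *\<^sub>R s)"
    unfolding F(3) by (simp add: scaleR_sum_right)
  then show ?thesis
    unfolding zspan_def using F by (intro CollectI exI[of _ F] exI[of _ "\<lambda>s. a * c s"]) auto
qed

lemma zspan_diff:
  assumes "x \<in> zspan S" "y \<in> zspan S"
  shows "x - y \<in> zspan S"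
  using zspan_add[OF assms(1) zspan_scaleR_of_int[OF assms(2), of "-1"]] by simp

lemma zspan_subset_zspan:
  assumes "S \<subseteq> zspan T"
  shows "zspan S \<subseteq> zspan T"
proof
  fix x assume "x \<in> zspan S"
  then obtain F c where F: "finite F" "F \<subseteq> S" "x = (\<Sum>s\<in>F. of_int (c s) *\<^sub>R s)"
    unfolding zspan_def by blast
  have "finite F \<Longrightarrow> F \<subseteq> zspan T \<Longrightarrow> (\<Sum>s\<in>F. of_int (c s) *\<^sub>R s) \<in> zspan T"
    by (induction F rule: finite_induct) (simp_all add: zspan_zero zspan_add zspan_scaleR_of_int)
  with F assms show "x \<in> zspan T" by blast
qed

lemma root_sublattice_subset:
  assumes "is_lattice N"
  shows "root_sublattice N \<subseteq> N"
proof -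
  obtain B where N: "N = zspan B" using assms unfolding is_lattice_def by blast
  have "roots N \<subseteq> zspan B" using N unfolding roots_def by blast
  then show ?thesis unfolding root_sublattice_def N by (rule zspan_subset_zspan)
qed

lemma component_subset_root_sublattice:
  assumes "Rk \<in> components N"
  shows "Rk \<subseteq> root_sublattice N"
proof -
  obtain C where "C \<in> root_classes N" and Rk: "Rk = zspan C"
    using assms unfolding components_def by blast
  then have "C \<subseteq> zspan (roots N)"
    unfolding root_classes_def using zspan_superset by blast
  then show ?thesis unfolding Rk root_sublattice_def by (rule zspan_subset_zspan)
qed

lemma short_vector_in_root_sublattice:
  assumes "even_lattice N" "v \<in> N" "v \<bullet> v < 4"
  shows "v \<in> root_sublattice N"
proof -
  obtain k :: int where k: "v \<bullet> v = 2 * of_int k"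
    using assms(1,2) unfolding even_lattice_def by blast
  have "0 \<le> v \<bullet> v" by simp
  with k assms(3) have "k = 0 \<or> k = 1" by linarith
  then show ?thesis
  proof
    assume "k = 0"
    then show ?thesis using k zspan_zero unfolding root_sublattice_def by simp
  next
    assume "k = 1"
    then have "v \<in> roots N" using k assms(2) unfolding roots_def by simp
    then show ?thesis unfolding root_sublattice_def by (rule zspan_superset)
  qed
qed

lemma minimal_in_root_coset:
  assumes "is_lattice N" "even_lattice N" "l \<in> N" "l \<bullet> l = 4"
    and "l \<notin> root_sublattice N" and "r \<in> root_sublattice N"
  shows "l \<bullet> l \<le> (l + r) \<bullet> (l + r)"
proof (rule ccontr)
  assume "\<not> ?thesis"
  then have short: "(l + r) \<bullet> (l + r) < 4" using assms(4) by simp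
  obtain B where N: "N = zspan B" using assms(1) unfolding is_lattice_def by blast
  have "l + r \<in> N"
    using assms(3,6) root_sublattice_subset[OF assms(1)] zspan_add unfolding N by blast
  then have "l + r \<in> root_sublattice N"
    using short_vector_in_root_sublattice[OF assms(2)] short by blast
  then have "(l + r) - r \<in> root_sublattice N"
    using assms(6) zspan_diff unfolding root_sublattice_def by blast
  with assms(5) show False by simp
qed

theorem lemma4p1:
  fixes N :: "vec24 set" and l :: vec24
  assumes "niemeier N"
    and "rationally_generated_by_roots N"
    and "l \<in> N"
    and "l \<bullet> l = 4"
    and "\<exists>h\<in>N. l \<bullet> h = 4"
    and "l \<notin> root_sublattice N"
  shows "\<forall>Rk\<in>components N. minimal_in_class (proj Rk l) Rk"
proof
  fix Rk assume "Rk \<in> components N"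
  then have "Rk \<subseteq> root_sublattice N" by (rule component_subset_root_sublattice)
  moreover have "is_lattice N" "even_lattice N"
    using assms(1) unfolding niemeier_def by auto
  ultimately have "\<forall>r\<in>Rk. l \<bullet> l \<le> (l + r) \<bullet> (l + r)"
    using minimal_in_root_coset assms(3,4,6) by blast
  then show "minimal_in_class (proj Rk l) Rk" by (rule minimal_in_class_proj)
qed

end
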